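(* Let $\sigma_X>0$, $R_c\ge0$, $P\ge0$. Then $\underline D'(0,R_c,P|\mathcal N(\mu_X,\sigma_X^2))=\sigma_X^2+(\sigma_X-\sqrt P)_+^2$, and for $R>0$, $$\underline D'(R,R_c,P|\mathcal N(\mu_X,\sigma_X^2))=\begin{cases}\sigma_X^2e^{-2R}&\text{if }\frac{\sqrt P}{\sigma_X}\ge(1-\sqrt{1-e^{-2R}})\vee e^{-(R+R_c)},\\[2pt] \sigma_X^2+(\sigma_X-\sqrt P)^2-2\sigma_X(\sigma_X-\sqrt P)\sqrt{1-e^{-2R}}&\text{if }\frac{\sqrt P}{\sigma_X}\in[e^{-(R+R_c)},1-\sqrt{1-e^{-2R}}),\\[2pt] \sigma_X^2e^{-2R}+(\sigma_Xe^{-(R+R_c)}-\sqrt P)^2&\text{if }\frac{\sqrt P}{\sigma_X}\in[\nu(R,R_c),e^{-(R+R_c)}),\\[2pt] \sigma_X^2+(\sigma_X-\sqrt P)^2-2\sigma_X^2\sqrt{1-e^{-2R}}\sqrt{(1-e^{-(R+R_c)})\big(1+e^{-(R+R_c)}-\tfrac{2\sqrt P}{\sigma_X}\big)}&\text{if }\frac{\sqrt P}{\sigma_X}<\nu(R,R_c)\wedge e^{-(R+R_c)},\end{cases}$$ where $\nu(R,R_c):=\frac{e^{-2R}-e^{-2(R+R_c)}}{2-2e^{-(R+R_c)}}$. Moreover, the intervals $[e^{-(R+R_c)},1-\sqrt{1-e^{-2R}})$ and $[\nu(R,R_c),e^{-(R+R_c)})$ are never both non-empty.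
   Context: All logarithms are natural; $(a)_+:=\max\{a,0\}$, $a\vee b:=\max\{a,b\}$, $a\wedge b:=\min\{a,b\}$. For $R,R_c\ge0$, $P\ge 0$, $$\underline D'(R,R_c,P|\mathcal N(\mu_X,\sigma_X^2)):=\min_{\sigma_{\hat X}\in[(\sigma_X-\sqrt P)_+,\sigma_X]}\Big(\sigma_X^2+\sigma_{\hat X}^2-2\sigma_X\sqrt{(1-e^{-2R})\big(\sigma_{\hat X}^2-((\sigma_Xe^{-(R+R_c)}-\sqrt P)_+)^2\big)}\Big).$$ *)

theory Defs
  imports Complex_Main
begin

definition pos_part :: "real \<Rightarrow> real" where
  "pos_part a = max a 0"

text \<open>Lower bound D'(R,R_c,P | N(mu,sigma^2)); the minimum over the compact interval is
  written as the infimum of the (continuous) objective over that interval.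
  The mean mu does not enter the formula.\<close>
definition Dlow' :: "real \<Rightarrow> real \<Rightarrow> real \<Rightarrow> real \<Rightarrow> real \<Rightarrow> real" where
  "Dlow' R Rc P mu sigma =
     Inf ((\<lambda>s. sigma\<^sup>2 + s\<^sup>2 - 2 * sigma *
              sqrt ((1 - exp (-2*R)) * (s\<^sup>2 - (pos_part (sigma * exp (-(R+Rc)) - sqrt P))\<^sup>2)))
          ` {pos_part (sigma - sqrt P) .. sigma})"

definition nu :: "real \<Rightarrow> real \<Rightarrow> real" where
  "nu R Rc = (exp (-2*R) - exp (-2*(R+Rc))) / (2 - 2 * exp (-(R+Rc)))"

end

theory Submission
  imports Defs
begin

text \<open>Put \<open>c = 1 - e^(-2R)\<close> and \<open>t = (\<sigma> e^(-(R+R\<^sub>c)) - \<surd>P)\<^sub>+\<close>. In terms of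
  \<open>y = \<surd>(s\<^sup>2 - t\<^sup>2)\<close> the objective is the parabola \<open>\<sigma>\<^sup>2(1 - c) + t\<^sup>2 + (y - \<sigma>\<surd>c)\<^sup>2\<close>,
  and \<open>y\<close> increases with \<open>s\<close>. Hence the minimum over \<open>[(\<sigma> - \<surd>P)\<^sub>+, \<sigma>]\<close> is attained
  at the critical point \<open>s = \<surd>(t\<^sup>2 + \<sigma>\<^sup>2c)\<close> if it lies in the interval, and at the left
  endpoint otherwise. The four regimes combine this alternative with \<open>t = 0\<close> or \<open>t > 0\<close>;
  for \<open>t > 0\<close> the left endpoint lies beyond the critical point exactly when
  \<open>\<surd>P/\<sigma> < \<nu>(R, R\<^sub>c)\<close>.\<close>

definition distortion_objective :: "real \<Rightarrow> real \<Rightarrow> real \<Rightarrow> real \<Rightarrow> real" where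
  "distortion_objective \<sigma> c t s = \<sigma>\<^sup>2 + s\<^sup>2 - 2 * \<sigma> * sqrt (c * (s\<^sup>2 - t\<^sup>2))"

lemma distortion_objective_completed_square:
  assumes "0 \<le> c" "t\<^sup>2 \<le> s\<^sup>2"
  shows "distortion_objective \<sigma> c t s = \<sigma>\<^sup>2 * (1 - c) + t\<^sup>2 + (sqrt (s\<^sup>2 - t\<^sup>2) - \<sigma> * sqrt c)\<^sup>2"
proof -
  have "(sqrt (s\<^sup>2 - t\<^sup>2))\<^sup>2 = s\<^sup>2 - t\<^sup>2" "(sqrt c)\<^sup>2 = c"
    using assms by simp_all
  then show ?thesis
    unfolding distortion_objective_def real_sqrt_mult
    by (simp add: power2_diff power_mult_distrib algebra_simps)
qed

lemma Inf_distortion_objective_at_critical: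
  assumes "0 \<le> c" "0 \<le> \<sigma>" "sqrt (t\<^sup>2 + \<sigma>\<^sup>2 * c) \<in> S" "\<And>s. s \<in> S \<Longrightarrow> t\<^sup>2 \<le> s\<^sup>2"
  shows "Inf (distortion_objective \<sigma> c t ` S) = \<sigma>\<^sup>2 * (1 - c) + t\<^sup>2"
proof (rule cInf_eq_minimum)
  let ?z = "sqrt (t\<^sup>2 + \<sigma>\<^sup>2 * c)"
  have z_sq: "?z\<^sup>2 = t\<^sup>2 + \<sigma>\<^sup>2 * c"
    using assms(1) by simp
  have "sqrt (?z\<^sup>2 - t\<^sup>2) = \<sigma> * sqrt c"
    using assms(1,2) by (simp add: z_sq real_sqrt_mult)
  then have "distortion_objective \<sigma> c t ?z = \<sigma>\<^sup>2 * (1 - c) + t\<^sup>2"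
    using assms(1) z_sq by (simp add: distortion_objective_completed_square)
  then show "\<sigma>\<^sup>2 * (1 - c) + t\<^sup>2 \<in> distortion_objective \<sigma> c t ` S"
    using assms(3) by (metis image_eqI)
  fix x assume "x \<in> distortion_objective \<sigma> c t ` S"
  then show "\<sigma>\<^sup>2 * (1 - c) + t\<^sup>2 \<le> x"
    using assms(1,4) by (auto simp: distortion_objective_completed_square)
qed

lemma Inf_distortion_objective_at_left_endpoint:
  assumes "0 \<le> c" "0 \<le> \<sigma>" "0 \<le> l" "l \<le> u" "\<sigma>\<^sup>2 * c \<le> l\<^sup>2 - t\<^sup>2"
  shows "Inf (distortion_objective \<sigma> c t ` {l..u}) = distortion_objective \<sigma> c t l"
proof (rule cInf_eq_minimum)
  show "distortion_objective \<sigma> c t l \<in> distortion_objective \<sigma> c t ` {l..u}"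
    using assms(4) by simp
  have "0 \<le> \<sigma>\<^sup>2 * c"
    using assms(1) by simp
  with assms(5) have t_le_l: "t\<^sup>2 \<le> l\<^sup>2"
    by linarith
  have critical_below_l: "\<sigma> * sqrt c \<le> sqrt (l\<^sup>2 - t\<^sup>2)"
    using assms(2,5) real_sqrt_le_mono[OF assms(5)] by (simp add: real_sqrt_mult)
  fix x assume "x \<in> distortion_objective \<sigma> c t ` {l..u}"
  then obtain s where s: "l \<le> s" and x: "x = distortion_objective \<sigma> c t s"
    by auto
  have "l\<^sup>2 \<le> s\<^sup>2"
    using assms(3) s by (simp add: power_mono)
  then have "sqrt (l\<^sup>2 - t\<^sup>2) \<le> sqrt (s\<^sup>2 - t\<^sup>2)"
    by simp
  with critical_below_l have "(sqrt (l\<^sup>2 - t\<^sup>2) - \<sigma> * sqrt c)\<^sup>2 \<le> (sqrt (s\<^sup>2 - t\<^sup>2) - \<sigma> * sqrt c)\<^sup>2"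
    by (intro power_mono) auto
  then show "distortion_objective \<sigma> c t l \<le> x"
    using x t_le_l \<open>l\<^sup>2 \<le> s\<^sup>2\<close> assms(1) by (simp add: distortion_objective_completed_square)
qed

definition lower_distortion :: "real \<Rightarrow> real \<Rightarrow> real \<Rightarrow> real \<Rightarrow> real" where
  "lower_distortion \<sigma> a q p =
     Inf (distortion_objective \<sigma> (1 - a) (pos_part (\<sigma> * q - p)) ` {pos_part (\<sigma> - p) .. \<sigma>})"

lemma Dlow'_eq_lower_distortion:
  "Dlow' R Rc P mu \<sigma> = lower_distortion \<sigma> (exp (-2*R)) (exp (-(R+Rc))) (sqrt P)"
  unfolding Dlow'_def lower_distortion_def distortion_objective_def ..

lemma nu_eq: "nu R Rc = (exp (-2*R) - (exp (-(R+Rc)))\<^sup>2) / (2 - 2 * exp (-(R+Rc)))"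
  by (simp add: nu_def power2_eq_square flip: exp_add)

lemma pos_part_nonneg: "0 \<le> pos_part x"
  by (simp add: pos_part_def)

lemma pos_part_scaled_le:
  assumes "0 \<le> \<sigma>" "q \<le> 1"
  shows "pos_part (\<sigma> * q - p) \<le> pos_part (\<sigma> - p)"
  using assms mult_left_le[of q \<sigma>] by (auto simp: pos_part_def)

lemma sq_pos_part_scaled_le:
  assumes "0 \<le> \<sigma>" "q \<le> 1" "s \<in> {pos_part (\<sigma> - p) .. \<sigma>}"
  shows "(pos_part (\<sigma> * q - p))\<^sup>2 \<le> s\<^sup>2"
proof (rule power_mono)
  show "pos_part (\<sigma> * q - p) \<le> s"
    using order_trans[OF pos_part_scaled_le[OF assms(1,2)]] assms(3) by simp
qed (rule pos_part_nonneg)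

text \<open>With \<open>t = \<sigma>q - p > 0\<close>, the left endpoint \<open>\<sigma> - p\<close> lies beyond the critical point
  iff this quantity is positive, i.e. iff \<open>p < \<sigma>\<nu>\<close>.\<close>

lemma endpoint_excess_eq:
  fixes \<sigma> p q a :: real
  assumes "q \<noteq> 1"
  shows "(\<sigma> - p)\<^sup>2 - (\<sigma> * q - p)\<^sup>2 - \<sigma>\<^sup>2 * (1 - a)
       = 2 * \<sigma> * (1 - q) * (\<sigma> * ((a - q\<^sup>2) / (2 - 2 * q)) - p)"
  using assms by (simp add: field_simps power2_eq_square)

lemma lower_distortion_zero_rate:
  assumes "0 < \<sigma>" "0 \<le> p" "q \<le> 1"
  shows "lower_distortion \<sigma> 1 q p = \<sigma>\<^sup>2 + (pos_part (\<sigma> - p))\<^sup>2"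
proof -
  have "(pos_part (\<sigma> * q - p))\<^sup>2 \<le> (pos_part (\<sigma> - p))\<^sup>2"
    using pos_part_scaled_le[OF _ assms(3)] assms(1) by (intro power_mono pos_part_nonneg) simp
  then have "\<sigma>\<^sup>2 * 0 \<le> (pos_part (\<sigma> - p))\<^sup>2 - (pos_part (\<sigma> * q - p))\<^sup>2"
    by simp
  then show ?thesis
    unfolding lower_distortion_def
    using assms by (subst Inf_distortion_objective_at_left_endpoint)
      (auto simp: pos_part_def distortion_objective_def)
qed

lemma lower_distortion_at_critical_offset_zero:
  assumes "0 < \<sigma>" "0 \<le> a" "a \<le> 1" "q \<le> p / \<sigma>" "1 - sqrt (1 - a) \<le> p / \<sigma>"
  shows "lower_distortion \<sigma> a q p = \<sigma>\<^sup>2 * a"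
proof -
  have t: "pos_part (\<sigma> * q - p) = 0"
    using assms(1,4) by (simp add: pos_part_def field_simps)
  have "\<sigma> - p \<le> \<sigma> * sqrt (1 - a)"
    using assms(1,5) by (simp add: field_simps)
  moreover have "sqrt (1 - a) \<le> 1"
    using assms(2) by simp
  ultimately have "\<sigma> * sqrt (1 - a) \<in> {pos_part (\<sigma> - p) .. \<sigma>}"
    using assms(1,3) by (auto simp: pos_part_def mult_left_le)
  then have "sqrt (0\<^sup>2 + \<sigma>\<^sup>2 * (1 - a)) \<in> {pos_part (\<sigma> - p) .. \<sigma>}"
    using assms(1) by (simp add: real_sqrt_mult)
  then show ?thesis
    unfolding lower_distortion_def t
    using assms(1,3) by (subst Inf_distortion_objective_at_critical) auto
qed

lemma lower_distortion_at_endpoint_offset_zero: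
  assumes "0 < \<sigma>" "0 \<le> p" "a \<le> 1" "q \<le> p / \<sigma>" "p / \<sigma> < 1 - sqrt (1 - a)"
  shows "lower_distortion \<sigma> a q p = \<sigma>\<^sup>2 + (\<sigma> - p)\<^sup>2 - 2 * \<sigma> * (\<sigma> - p) * sqrt (1 - a)"
proof -
  have t: "pos_part (\<sigma> * q - p) = 0"
    using assms(1,4) by (simp add: pos_part_def field_simps)
  have lt: "\<sigma> * sqrt (1 - a) < \<sigma> - p"
    using assms(1,5) by (simp add: field_simps)
  have nonneg: "0 \<le> \<sigma> * sqrt (1 - a)"
    using assms(1,3) by simp
  then have l: "pos_part (\<sigma> - p) = \<sigma> - p"
    using lt by (simp add: pos_part_def)
  have "(\<sigma> * sqrt (1 - a))\<^sup>2 \<le> (\<sigma> - p)\<^sup>2"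
    using lt nonneg by (intro power_mono) auto
  then have "\<sigma>\<^sup>2 * (1 - a) \<le> (\<sigma> - p)\<^sup>2 - 0\<^sup>2"
    using assms(3) by (simp add: power_mult_distrib)
  then have "lower_distortion \<sigma> a q p = distortion_objective \<sigma> (1 - a) 0 (\<sigma> - p)"
    unfolding lower_distortion_def t l
    using assms(1,2,3) lt nonneg by (intro Inf_distortion_objective_at_left_endpoint) auto
  also have "\<dots> = \<sigma>\<^sup>2 + (\<sigma> - p)\<^sup>2 - 2 * \<sigma> * (\<sigma> - p) * sqrt (1 - a)"
    using lt nonneg by (simp add: distortion_objective_def real_sqrt_mult)
  finally show ?thesis .
qed

lemma lower_distortion_at_critical_offset_pos:
  assumes "0 < \<sigma>" "0 \<le> p" "q < 1" "a \<le> 1" "q\<^sup>2 \<le> a"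
    and "(a - q\<^sup>2) / (2 - 2 * q) \<le> p / \<sigma>" "p / \<sigma> < q"
  shows "lower_distortion \<sigma> a q p = \<sigma>\<^sup>2 * a + (\<sigma> * q - p)\<^sup>2"
proof -
  define t where "t = \<sigma> * q - p"
  have t_pos: "0 < t"
    using assms(1,7) by (simp add: t_def field_simps)
  then have t: "pos_part (\<sigma> * q - p) = t"
    by (simp add: pos_part_def t_def)
  define z where "z = sqrt (t\<^sup>2 + \<sigma>\<^sup>2 * (1 - a))"
  have z_nonneg: "0 \<le> z" and z_sq: "z\<^sup>2 = t\<^sup>2 + \<sigma>\<^sup>2 * (1 - a)"
    using assms(4) by (simp_all add: z_def)
  have "t\<^sup>2 \<le> (\<sigma> * q)\<^sup>2"
    using t_pos assms(2) by (intro power_mono) (auto simp: t_def)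
  also have "\<dots> \<le> \<sigma>\<^sup>2 * a"
    using assms(5) by (simp add: power_mult_distrib mult_left_mono)
  finally have "z\<^sup>2 \<le> \<sigma>\<^sup>2"
    using z_sq by (simp add: algebra_simps)
  then have "z \<le> \<sigma>"
    using assms(1) z_nonneg by (simp add: power2_le_iff_abs_le)
  have "\<sigma> * ((a - q\<^sup>2) / (2 - 2 * q)) \<le> p"
    using assms(1,6) by (simp add: field_simps)
  then have "2 * \<sigma> * (1 - q) * (\<sigma> * ((a - q\<^sup>2) / (2 - 2 * q)) - p) \<le> 0"
    using assms(1,3) by (intro mult_nonneg_nonpos) auto
  then have "(\<sigma> - p)\<^sup>2 \<le> z\<^sup>2"
    using endpoint_excess_eq[of q \<sigma> p a] assms(3) z_sq by (simp add: t_def)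
  then have "\<sigma> - p \<le> z"
    using z_nonneg by (simp add: power2_le_iff_abs_le)
  with \<open>z \<le> \<sigma>\<close> z_nonneg have "z \<in> {pos_part (\<sigma> - p) .. \<sigma>}"
    by (auto simp: pos_part_def)
  moreover have "t\<^sup>2 \<le> s\<^sup>2" if "s \<in> {pos_part (\<sigma> - p) .. \<sigma>}" for s
    using sq_pos_part_scaled_le[OF _ _ that, of q] assms(1,3) t by simp
  ultimately show ?thesis
    unfolding lower_distortion_def t z_def
    using assms(1,4) by (subst Inf_distortion_objective_at_critical) (auto simp: t_def)
qed

lemma lower_distortion_at_endpoint_offset_pos:
  assumes "0 < \<sigma>" "0 \<le> p" "q < 1" "a \<le> 1"
    and "p / \<sigma> < (a - q\<^sup>2) / (2 - 2 * q)" "p / \<sigma> < q"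
  shows "lower_distortion \<sigma> a q p
       = \<sigma>\<^sup>2 + (\<sigma> - p)\<^sup>2 - 2 * \<sigma>\<^sup>2 * sqrt (1 - a) * sqrt ((1 - q) * (1 + q - 2 * p / \<sigma>))"
proof -
  define t where "t = \<sigma> * q - p"
  have "p < \<sigma> * q"
    using assms(1,6) by (simp add: field_simps)
  moreover have "\<sigma> * q < \<sigma>"
    using assms(1,3) mult_strict_left_mono[of q 1 \<sigma>] by simp
  ultimately have t: "pos_part (\<sigma> * q - p) = t" and l: "pos_part (\<sigma> - p) = \<sigma> - p" and "p < \<sigma>"
    by (simp_all add: pos_part_def t_def)
  have "p < \<sigma> * ((a - q\<^sup>2) / (2 - 2 * q))"
    using assms(1,5) by (simp add: field_simps)
  then have "0 < 2 * \<sigma> * (1 - q) * (\<sigma> * ((a - q\<^sup>2) / (2 - 2 * q)) - p)"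
    using assms(1,3) by simp
  then have excess: "\<sigma>\<^sup>2 * (1 - a) \<le> (\<sigma> - p)\<^sup>2 - t\<^sup>2"
    using endpoint_excess_eq[of q \<sigma> p a] assms(3) by (simp add: t_def)
  have gap: "(\<sigma> - p)\<^sup>2 - t\<^sup>2 = \<sigma>\<^sup>2 * ((1 - q) * (1 + q - 2 * p / \<sigma>))"
    using assms(1) by (simp add: t_def power2_eq_square field_simps)
  have "lower_distortion \<sigma> a q p = distortion_objective \<sigma> (1 - a) t (\<sigma> - p)"
    unfolding lower_distortion_def t l
    using assms(1,2,4) excess \<open>p < \<sigma>\<close> by (intro Inf_distortion_objective_at_left_endpoint) auto
  also have "\<dots> = \<sigma>\<^sup>2 + (\<sigma> - p)\<^sup>2 - 2 * \<sigma>\<^sup>2 * sqrt (1 - a) * sqrt ((1 - q) * (1 + q - 2 * p / \<sigma>))"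
    using assms(1) unfolding distortion_objective_def gap
    by (simp add: real_sqrt_mult power2_eq_square)
  finally show ?thesis .
qed

lemma regime_intervals_not_both_nonempty:
  assumes "q < 1" "a \<le> 1"
  shows "\<not> (q < 1 - sqrt (1 - a) \<and> (a - q\<^sup>2) / (2 - 2 * q) < q)"
proof
  assume h: "q < 1 - sqrt (1 - a) \<and> (a - q\<^sup>2) / (2 - 2 * q) < q"
  then have "(1 - q)\<^sup>2 < 1 - a"
    using assms(1) by (simp add: field_simps power2_eq_square)
  then have "1 - q < sqrt (1 - a)"
    using assms(1) real_sqrt_less_mono by fastforce
  with h show False
    by simp
qed

lemma lower_distortion_regimes:
  assumes "0 < \<sigma>" "0 \<le> p" "0 \<le> a" "a \<le> 1" "q < 1" "q\<^sup>2 \<le> a"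
  shows "(p / \<sigma> \<ge> max (1 - sqrt (1 - a)) q \<longrightarrow> lower_distortion \<sigma> a q p = \<sigma>\<^sup>2 * a)
    \<and> (q \<le> p / \<sigma> \<and> p / \<sigma> < 1 - sqrt (1 - a) \<longrightarrow>
          lower_distortion \<sigma> a q p = \<sigma>\<^sup>2 + (\<sigma> - p)\<^sup>2 - 2 * \<sigma> * (\<sigma> - p) * sqrt (1 - a))
    \<and> ((a - q\<^sup>2) / (2 - 2 * q) \<le> p / \<sigma> \<and> p / \<sigma> < q \<longrightarrow>
          lower_distortion \<sigma> a q p = \<sigma>\<^sup>2 * a + (\<sigma> * q - p)\<^sup>2)
    \<and> (p / \<sigma> < min ((a - q\<^sup>2) / (2 - 2 * q)) q \<longrightarrow>
          lower_distortion \<sigma> a q p =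
            \<sigma>\<^sup>2 + (\<sigma> - p)\<^sup>2 - 2 * \<sigma>\<^sup>2 * sqrt (1 - a) * sqrt ((1 - q) * (1 + q - 2 * p / \<sigma>)))
    \<and> \<not> (q < 1 - sqrt (1 - a) \<and> (a - q\<^sup>2) / (2 - 2 * q) < q)"
  using assms lower_distortion_at_critical_offset_zero lower_distortion_at_endpoint_offset_zero
    lower_distortion_at_critical_offset_pos lower_distortion_at_endpoint_offset_pos regime_intervals_not_both_nonempty
  by auto

theorem mainTheorem8:
  fixes mu sigma Rc P :: real
  assumes "sigma > 0" and "Rc \<ge> 0" and "P \<ge> 0"
  shows "(Dlow' 0 Rc P mu sigma = sigma\<^sup>2 + (pos_part (sigma - sqrt P))\<^sup>2)
    \<and> (\<forall>R>0. sqrt P / sigma \<ge> max (1 - sqrt (1 - exp (-2*R))) (exp (-(R+Rc))) \<longrightarrow>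
            Dlow' R Rc P mu sigma = sigma\<^sup>2 * exp (-2*R))
    \<and> (\<forall>R>0. exp (-(R+Rc)) \<le> sqrt P / sigma \<and> sqrt P / sigma < 1 - sqrt (1 - exp (-2*R)) \<longrightarrow>
            Dlow' R Rc P mu sigma =
              sigma\<^sup>2 + (sigma - sqrt P)\<^sup>2 - 2 * sigma * (sigma - sqrt P) * sqrt (1 - exp (-2*R)))
    \<and> (\<forall>R>0. nu R Rc \<le> sqrt P / sigma \<and> sqrt P / sigma < exp (-(R+Rc)) \<longrightarrow>
            Dlow' R Rc P mu sigma = sigma\<^sup>2 * exp (-2*R) + (sigma * exp (-(R+Rc)) - sqrt P)\<^sup>2)
    \<and> (\<forall>R>0. sqrt P / sigma < min (nu R Rc) (exp (-(R+Rc))) \<longrightarrow>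
            Dlow' R Rc P mu sigma =
              sigma\<^sup>2 + (sigma - sqrt P)\<^sup>2 - 2 * sigma\<^sup>2 * sqrt (1 - exp (-2*R)) *
                sqrt ((1 - exp (-(R+Rc))) * (1 + exp (-(R+Rc)) - 2 * sqrt P / sigma)))
    \<and> (\<forall>R>0. \<not> (exp (-(R+Rc)) < 1 - sqrt (1 - exp (-2*R)) \<and> nu R Rc < exp (-(R+Rc))))"
proof -
  have zero_rate: "Dlow' 0 Rc P mu sigma = sigma\<^sup>2 + (pos_part (sigma - sqrt P))\<^sup>2"
    using lower_distortion_zero_rate[OF assms(1) real_sqrt_ge_zero[OF assms(3)]] assms(2)
    by (simp add: Dlow'_eq_lower_distortion)
  have rate_a: "exp (-2*R) \<le> 1" and rate_q: "exp (-(R+Rc)) < 1"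
    and rate_aq: "(exp (-(R+Rc)))\<^sup>2 \<le> exp (-2*R)" if "R > 0" for R
    using that assms(2) by (simp_all add: power2_eq_square flip: exp_add)
  note regimes = lower_distortion_regimes[OF assms(1) real_sqrt_ge_zero[OF assms(3)] exp_ge_zero
      rate_a rate_q rate_aq]
  show ?thesis
    using zero_rate regimes unfolding Dlow'_eq_lower_distortion nu_eq by blast
qed

end
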